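(* Let $\delta>0$, $L \in \mathbb N$, $A \subset \Lambda_n$, $x,y \in A$ with $\bar y = \bar x + L$, and let $\gamma$ be a self-avoiding nearest-neighbour walk in $A$ from $x$ to $y$. Assume $|\gamma| < (1+\delta) L$. Then $\gamma$ has at least $(1 - 3\delta) L$ pre-regeneration points.
   Context: $\Lambda_n=([0,n]\times(-n/2,n/2]^{d-1})\cap\mathbb Z^d$ with nearest-neighbour edges and periodic boundary conditions in the last $d-1$ coordinates; points $x=(\bar x,\hat x)$. A self-avoiding walk is identified with its set of vertices $\gamma$, totally ordered by order of visit; $|\gamma|$ is its number of vertices. For $w\in\Lambda_n$, $\mathcal C_w=\{u\in\Lambda_n:\bar u-\bar w\ge|\hat u-\hat w|\}\cup\{u\in\Lambda_n:\bar u\ge\bar w+\log n\}$ (with $|\hat u-\hat w|$ the transverse distance). A point $w\in\gamma$ is a pre-regeneration point of $\gamma$ if $u\in\mathcal C_w$ for all $u\in\gamma$ with $u\ge w$, and $\bar u<\bar w$ for all $u\in\gamma$ with $u<w$. *)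

theory Defs
  imports Complex_Main
begin

text \<open>A point x = (xbar, xhat) of Z^d: first coordinate xbar, transverse coordinates
  xhat 0, ..., xhat (d-2) (and xhat i = 0 for i >= d-1).\<close>
type_synonym point = "int \<times> (nat \<Rightarrow> int)"

definition Lambda :: "nat \<Rightarrow> nat \<Rightarrow> point set" where
  "Lambda d n = {(a, v). 0 \<le> a \<and> a \<le> int n \<and>
      (\<forall>i < d - 1. - int n < 2 * v i \<and> 2 * v i \<le> int n) \<and>
      (\<forall>i \<ge> d - 1. v i = 0)}"

definition adj :: "nat \<Rightarrow> nat \<Rightarrow> point \<Rightarrow> point \<Rightarrow> bool" where
  "adj d n u v \<longleftrightarrow> u \<in> Lambda d n \<and> v \<in> Lambda d n \<and> u \<noteq> v \<and>
     ((\<bar>fst u - fst v\<bar> = 1 \<and> snd u = snd v) \<or>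
      (fst u = fst v \<and> (\<exists>i < d - 1.
          ((snd u i - snd v i - 1) mod int n = 0 \<or> (snd u i - snd v i + 1) mod int n = 0) \<and>
          (\<forall>j. j \<noteq> i \<longrightarrow> snd u j = snd v j))))"

definition cdist :: "nat \<Rightarrow> int \<Rightarrow> int \<Rightarrow> int" where
  "cdist n a b = min ((a - b) mod int n) ((b - a) mod int n)"

definition tdist :: "nat \<Rightarrow> nat \<Rightarrow> point \<Rightarrow> point \<Rightarrow> int" where
  "tdist d n u w = (\<Sum>i<d - 1. cdist n (snd u i) (snd w i))"

definition cone :: "nat \<Rightarrow> nat \<Rightarrow> point \<Rightarrow> point set" where
  "cone d n w = {u \<in> Lambda d n. fst u - fst w \<ge> tdist d n u w} \<union>
                {u \<in> Lambda d n. real_of_int (fst u) \<ge> real_of_int (fst w) + ln (real n)}"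

definition saw_in :: "nat \<Rightarrow> nat \<Rightarrow> point set \<Rightarrow> point \<Rightarrow> point \<Rightarrow> point list \<Rightarrow> bool" where
  "saw_in d n A x y \<gamma> \<longleftrightarrow> \<gamma> \<noteq> [] \<and> distinct \<gamma> \<and> set \<gamma> \<subseteq> A \<and>
     hd \<gamma> = x \<and> last \<gamma> = y \<and>
     (\<forall>k. Suc k < length \<gamma> \<longrightarrow> adj d n (\<gamma> ! k) (\<gamma> ! Suc k))"

definition prereg :: "nat \<Rightarrow> nat \<Rightarrow> point list \<Rightarrow> nat \<Rightarrow> bool" where
  "prereg d n \<gamma> k \<longleftrightarrow> k < length \<gamma> \<and>
     (\<forall>j. k \<le> j \<and> j < length \<gamma> \<longrightarrow> \<gamma> ! j \<in> cone d n (\<gamma> ! k)) \<and>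
     (\<forall>j < k. fst (\<gamma> ! j) < fst (\<gamma> ! k))"

definition num_prereg :: "nat \<Rightarrow> nat \<Rightarrow> point list \<Rightarrow> nat" where
  "num_prereg d n \<gamma> = card {k. prereg d n \<gamma> k}"

end

theory Submission imports Defs begin

text \<open>
  Along \<gamma>, each step either changes the first coordinate by \<open>\<plusminus>1\<close> or is a transverse step,
  which leaves it unchanged and moves the transverse position by distance at most 1.
  Subtracting the number of transverse steps taken so far from the height therefore gives a
  \<open>\<plusminus>1\<close> walk \<psi>. If time k is a ladder time of \<psi> (a strict record of \<psi> up to k which is never
  undercut afterwards), then for \<open>j \<ge> k\<close> the transverse displacement from \<open>\<gamma>\<^sub>k\<close> to \<open>\<gamma>\<^sub>j\<close> is at
  most the number of transverse steps in between, which is at most the height gain, so \<open>\<gamma>\<^sub>j\<close>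
  lies in the cone of \<open>\<gamma>\<^sub>k\<close>; and all earlier points are strictly lower. Thus ladder times of \<psi>
  are pre-regeneration points.
  A \<open>\<plusminus>1\<close> walk of N steps with net displacement \<Delta> has at least \<open>(3\<Delta> - N)/2\<close> ladder times, since
  every up-step reaching a new maximum creates one and every down-step destroys at most one.
  Since \<open>\<Delta> \<ge> 2L - N\<close> and \<open>N < (1 + \<delta>) L - 1\<close>, this gives at least \<open>(1 - 3\<delta>) L\<close> of them.
\<close>

definition ladder_times :: "(nat \<Rightarrow> int) \<Rightarrow> nat \<Rightarrow> nat set" where
  "ladder_times p N = {k. k \<le> N \<and> (\<forall>j<k. p j < p k) \<and> (\<forall>j. k \<le> j \<and> j \<le> N \<longrightarrow> p k \<le> p j)}"

definition down_steps :: "(nat \<Rightarrow> int) \<Rightarrow> nat \<Rightarrow> int" where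
  "down_steps p N = (\<Sum>s<N. of_bool (p (Suc s) < p s))"

lemma finite_ladder_times: "finite (ladder_times p N)"
  by (rule finite_subset[of _ "{..N}"]) (auto simp: ladder_times_def)

lemma ladder_times_le_last: "k \<in> ladder_times p N \<Longrightarrow> p k \<le> p N"
  by (simp add: ladder_times_def)

lemma inj_on_ladder_times: "inj_on p (ladder_times p N)"
  by (rule inj_onI, rule ccontr) (auto simp: ladder_times_def neq_iff)

lemma ladder_times_Suc:
  "ladder_times p (Suc N) = {k \<in> ladder_times p N. p k \<le> p (Suc N)} \<union>
     (if \<forall>j<Suc N. p j < p (Suc N) then {Suc N} else {})"
  by (auto simp: ladder_times_def le_Suc_eq)

lemma card_ladder_times_le_Suc_below_last:
  "card (ladder_times p N) \<le> Suc (card {k \<in> ladder_times p N. p k < p N})"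
proof -
  define S where "S = {k \<in> ladder_times p N. p k = p N}"
  have "card S = card (p ` S)"
    using inj_on_ladder_times[of p N] by (intro card_image[symmetric]) (auto simp: S_def inj_on_def)
  also have "\<dots> \<le> card {p N}" by (intro card_mono) (auto simp: S_def)
  finally have "card S \<le> 1" by simp
  moreover have "ladder_times p N = {k \<in> ladder_times p N. p k < p N} \<union> S"
    using ladder_times_le_last[of _ p N] by (fastforce simp: S_def)
  ultimately show ?thesis using card_Un_le[of "{k \<in> ladder_times p N. p k < p N}" S] by simp
qed

lemma pm1_walk_net_displacement:
  assumes "\<forall>s<N. p (Suc s) = p s + 1 \<or> p (Suc s) = p s - 1"
  shows "p N - p 0 = int N - 2 * down_steps p N"
  using assms by (induction N) (auto simp: down_steps_def)

lemma card_ladder_times_ge: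
  assumes "\<forall>s<N. p (Suc s) = p s + 1 \<or> p (Suc s) = p s - 1"
  shows "Max (p ` {..N}) - p 0 - down_steps p N \<le> int (card (ladder_times p N))"
  using assms
proof (induction N)
  case 0
  have "ladder_times p 0 = {0}" by (auto simp: ladder_times_def)
  then show ?case by (simp add: down_steps_def)
next
  case (Suc N)
  define G where "G = ladder_times p N"
  define M where "M = Max (p ` {..N})"
  have IH: "M - p 0 - down_steps p N \<le> int (card G)"
    using Suc by (simp add: G_def M_def)
  have Max_Suc: "Max (p ` {..Suc N}) = max M (p (Suc N))"
    by (simp add: M_def atMost_Suc max.commute)
  have below_M: "p j \<le> M" if "j \<le> N" for j
    using that by (simp add: M_def)
  have kept: "card {k \<in> G. p k \<le> p (Suc N)} \<le> card (ladder_times p (Suc N))"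
    by (intro card_mono finite_ladder_times) (auto simp: ladder_times_Suc G_def)
  consider "p (Suc N) = p N + 1" | "p (Suc N) = p N - 1" using Suc.prems by auto
  then show ?case
  proof cases
    case up: 1
    have all_kept: "{k \<in> G. p k \<le> p (Suc N)} = G"
      using up ladder_times_le_last[of _ p N] by (fastforce simp: G_def)
    show ?thesis
    proof (cases "p N = M")
      case True
      then have "\<forall>j<Suc N. p j < p (Suc N)" using up below_M by fastforce
      then have "ladder_times p (Suc N) = insert (Suc N) G"
        using all_kept by (simp add: ladder_times_Suc G_def)
      moreover have "Suc N \<notin> G" by (simp add: G_def ladder_times_def)
      ultimately show ?thesis
        using IH Max_Suc up True finite_ladder_times[of p N]
        by (simp add: G_def down_steps_def max_def)
    next
      case False
      then have "max M (p (Suc N)) = M" using up below_M[of N] by auto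
      then show ?thesis using IH Max_Suc up kept all_kept
        by (simp add: down_steps_def)
    qed
  next
    case down: 2
    have "{k \<in> G. p k \<le> p (Suc N)} = {k \<in> G. p k < p N}" using down by auto
    moreover have "max M (p (Suc N)) = M" using down below_M[of N] by auto
    ultimately show ?thesis
      using IH Max_Suc down kept card_ladder_times_le_Suc_below_last[of p N]
      by (simp add: G_def down_steps_def)
  qed
qed

lemma card_ladder_times_ge_displacement:
  assumes "\<forall>s<N. p (Suc s) = p s + 1 \<or> p (Suc s) = p s - 1"
  shows "3 * (p N - p 0) - int N \<le> 2 * int (card (ladder_times p N))"
proof -
  have "p N \<le> Max (p ` {..N})" by simp
  then have "p N - p 0 - down_steps p N \<le> int (card (ladder_times p N))"
    using card_ladder_times_ge[OF assms] by linarith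
  then show ?thesis using pm1_walk_net_displacement[OF assms] by (simp add: algebra_simps)
qed

lemma mod_add_le:
  fixes m :: int
  assumes "0 < m"
  shows "(u + v) mod m \<le> u mod m + v mod m"
proof -
  have "(u + v) mod m = (u mod m + v mod m) mod m" by (simp add: mod_add_eq)
  also have "\<dots> \<le> u mod m + v mod m"
    using assms by (intro zmod_le_nonneg_dividend) simp
  finally show ?thesis .
qed

lemma min_mod_diff_le:
  fixes m :: int
  assumes "0 < m"
  shows "min ((u - v) mod m) ((v - u) mod m) \<le> u mod m + v mod m"
proof -
  define a b where "a = u mod m" and "b = v mod m"
  have "0 \<le> a" "a < m" "0 \<le> b" "b < m"
    using assms by (simp_all add: a_def b_def)
  moreover have "(u - v) mod m = (a - b) mod m" "(v - u) mod m = (b - a) mod m"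
    by (simp_all add: a_def b_def mod_diff_eq)
  ultimately show ?thesis
    unfolding a_def[symmetric] b_def[symmetric]
    by (cases "b \<le> a") (simp_all add: mod_pos_pos_trivial)
qed

lemma cdist_commute: "cdist n a b = cdist n b a"
  by (simp add: cdist_def min.commute)

lemma cdist_triangle:
  assumes "n \<ge> 1"
  shows "cdist n a c \<le> cdist n a b + cdist n b c"
proof -
  define x y where "x = a - b" and "y = b - c"
  have m: "0 < int n" using assms by simp
  have "a - c = x + y" "c - a = - x - y" "a - b = x" "b - a = - x" "b - c = y" "c - b = - y"
    by (simp_all add: x_def y_def)
  then have "cdist n a c = min ((x + y) mod int n) ((- x - y) mod int n)"
      and "cdist n a b = min (x mod int n) ((- x) mod int n)"
      and "cdist n b c = min (y mod int n) ((- y) mod int n)"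
    by (simp_all only: cdist_def)
  moreover have "(x + y) mod int n \<le> x mod int n + y mod int n"
       "(- x - y) mod int n \<le> (- x) mod int n + (- y) mod int n"
    using mod_add_le[OF m, of x y] mod_add_le[OF m, of "- x" "- y"] by simp_all
  moreover have "min ((x + y) mod int n) ((- x - y) mod int n) \<le> x mod int n + (- y) mod int n"
                "min ((x + y) mod int n) ((- x - y) mod int n) \<le> (- x) mod int n + y mod int n"
    using min_mod_diff_le[OF m, of x "- y"] min_mod_diff_le[OF m, of y "- x"]
      minus_diff_commute[of y x] by (simp_all add: add.commute)
  ultimately show ?thesis
    by (simp only: min_add_distrib_left min_add_distrib_right min.bounded_iff)
      (auto intro: min.coboundedI1 min.coboundedI2 simp: add.commute)
qed

lemma cdist_neighbour:
  assumes "(a - b - 1) mod int n = 0 \<or> (a - b + 1) mod int n = 0"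
  shows "cdist n a b \<le> 1"
proof -
  have "(a - b) mod int n = 1 mod int n \<or> (b - a) mod int n = 1 mod int n"
    using assms dvd_minus_iff[of "int n" "a - b + 1"]
    by (simp add: mod_eq_dvd_iff mod_eq_0_iff_dvd algebra_simps)
  moreover have "1 mod int n \<le> 1" by (simp add: zmod_le_nonneg_dividend)
  ultimately show ?thesis by (auto simp: cdist_def)
qed

lemma tdist_adj_le:
  assumes "n \<ge> 1" "adj d n u v"
  shows "tdist d n v w \<le> tdist d n u w + of_bool (fst u = fst v)"
proof (cases "fst u = fst v")
  case False
  then have "snd u = snd v" using assms(2) by (auto simp: adj_def)
  then show ?thesis by (simp add: tdist_def)
next
  case True
  then obtain i where i: "i < d - 1"
      "(snd u i - snd v i - 1) mod int n = 0 \<or> (snd u i - snd v i + 1) mod int n = 0"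
      and others: "\<forall>j. j \<noteq> i \<longrightarrow> snd u j = snd v j"
    using assms(2) by (auto simp: adj_def)
  have "cdist n (snd v j) (snd w j) \<le> cdist n (snd u j) (snd w j) + of_bool (j = i)" for j
  proof (cases "j = i")
    case True
    have "cdist n (snd v i) (snd w i) \<le> cdist n (snd v i) (snd u i) + cdist n (snd u i) (snd w i)"
      by (rule cdist_triangle[OF assms(1)])
    moreover have "cdist n (snd v i) (snd u i) \<le> 1"
      using cdist_neighbour[OF i(2)] by (simp add: cdist_commute)
    ultimately show ?thesis using True by simp
  qed (use others in simp)
  then have "tdist d n v w \<le> (\<Sum>j<d - 1. cdist n (snd u j) (snd w j) + of_bool (j = i))"
    unfolding tdist_def by (rule sum_mono)
  also have "\<dots> = tdist d n u w + 1" using i(1) by (simp add: tdist_def sum.distrib)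
  finally show ?thesis using True by simp
qed

definition nn_walk :: "nat \<Rightarrow> nat \<Rightarrow> point list \<Rightarrow> bool" where
  "nn_walk d n \<gamma> \<longleftrightarrow> (\<forall>k. Suc k < length \<gamma> \<longrightarrow> adj d n (\<gamma> ! k) (\<gamma> ! Suc k))"

definition flat_steps :: "point list \<Rightarrow> nat \<Rightarrow> int" where
  "flat_steps \<gamma> j = (\<Sum>s<j. of_bool (fst (\<gamma> ! s) = fst (\<gamma> ! Suc s)))"

definition reduced_height :: "point list \<Rightarrow> nat \<Rightarrow> int" where
  "reduced_height \<gamma> j = fst (\<gamma> ! j) - flat_steps \<gamma> j"

lemma flat_steps_Suc [simp]:
  "flat_steps \<gamma> (Suc j) = flat_steps \<gamma> j + of_bool (fst (\<gamma> ! j) = fst (\<gamma> ! Suc j))"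
  by (simp add: flat_steps_def)

lemma flat_steps_mono: "j \<le> k \<Longrightarrow> flat_steps \<gamma> j \<le> flat_steps \<gamma> k"
  unfolding flat_steps_def by (rule sum_mono2) auto

lemma nn_walk_step_cases:
  assumes "nn_walk d n \<gamma>" "Suc s < length \<gamma>"
  shows "fst (\<gamma> ! Suc s) = fst (\<gamma> ! s) \<or> \<bar>fst (\<gamma> ! Suc s) - fst (\<gamma> ! s)\<bar> = 1"
  using assms by (auto simp: nn_walk_def adj_def)

lemma reduced_height_pm1:
  assumes "nn_walk d n \<gamma>"
  shows "\<forall>s<length \<gamma> - 1. reduced_height \<gamma> (Suc s) = reduced_height \<gamma> s + 1 \<or>
                              reduced_height \<gamma> (Suc s) = reduced_height \<gamma> s - 1"
proof (intro allI impI)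
  fix s assume "s < length \<gamma> - 1"
  then have "Suc s < length \<gamma>" by simp
  then show "reduced_height \<gamma> (Suc s) = reduced_height \<gamma> s + 1 \<or>
             reduced_height \<gamma> (Suc s) = reduced_height \<gamma> s - 1"
    using nn_walk_step_cases[OF assms, of s] by (auto simp: reduced_height_def abs_eq_iff)
qed

lemma height_gain_le:
  assumes "nn_walk d n \<gamma>" "j < length \<gamma>"
  shows "fst (\<gamma> ! j) - fst (\<gamma> ! 0) + flat_steps \<gamma> j \<le> int j"
  using assms(2)
proof (induction j)
  case (Suc j)
  then show ?case using nn_walk_step_cases[OF assms(1), of j] by auto
qed (simp add: flat_steps_def)

lemma tdist_le_flat_steps:
  assumes "n \<ge> 1" "nn_walk d n \<gamma>" "k \<le> j" "j < length \<gamma>"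
  shows "tdist d n (\<gamma> ! j) (\<gamma> ! k) \<le> flat_steps \<gamma> j - flat_steps \<gamma> k"
  using assms(3,4)
proof (induction j)
  case 0
  then show ?case by (simp add: tdist_def cdist_def)
next
  case (Suc j)
  show ?case
  proof (cases "k = Suc j")
    case True
    then show ?thesis by (simp add: tdist_def cdist_def)
  next
    case False
    with Suc.prems have "k \<le> j" "Suc j < length \<gamma>" by auto
    then show ?thesis
      using Suc.IH tdist_adj_le[OF assms(1), of d "\<gamma> ! j" "\<gamma> ! Suc j" "\<gamma> ! k"] assms(2)
      by (auto simp: nn_walk_def)
  qed
qed

lemma ladder_times_prereg:
  assumes "n \<ge> 1" "nn_walk d n \<gamma>" "set \<gamma> \<subseteq> Lambda d n" "\<gamma> \<noteq> []"
    and "k \<in> ladder_times (reduced_height \<gamma>) (length \<gamma> - 1)"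
  shows "prereg d n \<gamma> k"
proof -
  have "k \<le> length \<gamma> - 1" using assms(5) by (simp add: ladder_times_def)
  then have k: "k < length \<gamma>" using assms(4) by (cases \<gamma>) auto
  have before: "\<And>j. j < k \<Longrightarrow> reduced_height \<gamma> j < reduced_height \<gamma> k"
    and after: "\<And>j. k \<le> j \<Longrightarrow> j < length \<gamma> \<Longrightarrow> reduced_height \<gamma> k \<le> reduced_height \<gamma> j"
    using assms(5) by (auto simp: ladder_times_def)
  have "\<gamma> ! j \<in> cone d n (\<gamma> ! k)" if "k \<le> j" "j < length \<gamma>" for j
  proof -
    have "tdist d n (\<gamma> ! j) (\<gamma> ! k) \<le> flat_steps \<gamma> j - flat_steps \<gamma> k"
      by (rule tdist_le_flat_steps[OF assms(1,2) that])
    also have "\<dots> \<le> fst (\<gamma> ! j) - fst (\<gamma> ! k)"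
      using after[OF that] by (simp add: reduced_height_def)
    moreover have "\<gamma> ! j \<in> Lambda d n" using that assms(3) nth_mem by blast
    ultimately show ?thesis by (simp add: cone_def)
  qed
  moreover have "fst (\<gamma> ! j) < fst (\<gamma> ! k)" if "j < k" for j
    using before[OF that] flat_steps_mono[of j k \<gamma>] that by (simp add: reduced_height_def)
  ultimately show ?thesis using k by (simp add: prereg_def)
qed

theorem lemma5p4:
  fixes d n L :: nat and \<delta> :: real and A :: "point set" and x y :: point
    and \<gamma> :: "point list"
  assumes "d \<ge> 2" and "n \<ge> 1"
    and "\<delta> > 0"
    and "A \<subseteq> Lambda d n" and "x \<in> A" and "y \<in> A"
    and "fst y = fst x + int L"
    and "saw_in d n A x y \<gamma>"
    and "real (length \<gamma>) < (1 + \<delta>) * real L"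
  shows "real (num_prereg d n \<gamma>) \<ge> (1 - 3 * \<delta>) * real L"
proof -
  define N where "N = length \<gamma> - 1"
  have ne: "\<gamma> \<noteq> []" and walk: "nn_walk d n \<gamma>" and in_Lambda: "set \<gamma> \<subseteq> Lambda d n"
    and ends: "\<gamma> ! 0 = x" "\<gamma> ! N = y"
    using assms(4,8) by (auto simp: saw_in_def nn_walk_def N_def hd_conv_nth last_conv_nth)
  have "ladder_times (reduced_height \<gamma>) N \<subseteq> {k. prereg d n \<gamma> k}"
    using ladder_times_prereg[OF assms(2) walk in_Lambda ne] by (auto simp: N_def)
  then have "int (card (ladder_times (reduced_height \<gamma>) N)) \<le> int (num_prereg d n \<gamma>)"
    unfolding num_prereg_def
    by (intro of_nat_mono card_mono) (auto intro: finite_subset[of _ "{..<length \<gamma>}"] simp: prereg_def)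
  moreover have "3 * (reduced_height \<gamma> N - reduced_height \<gamma> 0) - int N
      \<le> 2 * int (card (ladder_times (reduced_height \<gamma>) N))"
    using card_ladder_times_ge_displacement reduced_height_pm1[OF walk] by (simp add: N_def)
  moreover have "reduced_height \<gamma> N - reduced_height \<gamma> 0 = int L - flat_steps \<gamma> N"
    using ends assms(7) by (simp add: reduced_height_def flat_steps_def)
  moreover have "flat_steps \<gamma> N \<le> int N - int L"
    using height_gain_le[OF walk, of N] ends assms(7) ne by (simp add: N_def)
  ultimately have "3 * int L - 2 * int N \<le> int (num_prereg d n \<gamma>)"
    unfolding right_diff_distrib by linarith
  then have "3 * real L - 2 * real N \<le> real (num_prereg d n \<gamma>)" by linarith
  moreover have "real (length \<gamma>) = real N + 1" using ne by (cases \<gamma>) (simp_all add: N_def)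
  moreover have "0 \<le> \<delta> * real L" using assms(3) by simp
  ultimately show ?thesis using assms(9) by (simp add: algebra_simps)
qed

end
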